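(* Let $K$ be a finite simplicial complex, $N\subseteq K$ closed, and $\mathcal V_1,\mathcal V_2$ multivector fields on $K$. For $k\in\{1,2\}$ let $\mathcal M_k$ be a Morse decomposition of an isolated invariant set $S_k$ isolated by $N$ under $\mathcal V_k$, with Conley-Morse graph $G_k$. Let $\mathcal M_{1,2}$ be the minimal Morse decomposition of the maximal invariant set $S_{1,2}=\mathrm{inv}_{\mathcal V_1\wedge\mathcal V_2}(N)$ under the intersection field $\mathcal V_1\wedge\mathcal V_2$, and let $G_{1,2}$ be the relevant Conley-Morse graph. If there is a directed edge from $M_{1,2}$ to $M'_{1,2}$ in $G_{1,2}$, then for each $k\in\{1,2\}$ either $\iota_k(M_{1,2})=\iota_k(M'_{1,2})$ or there exists a directed edge from $\iota_k(M_{1,2})$ to $\iota_k(M'_{1,2})$ in $G_k$.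
   Context: $\sigma\le\tau$ means $\sigma$ is a face of $\tau$; $\mathrm{cl}(A)$ is the set of faces of simplices of $A$; closed means $A=\mathrm{cl}(A)$. A multivector is a convex subset of $K$ w.r.t. $\le$; a multivector field is a partition of $K$ into multivectors; $[\sigma]_{\mathcal V}$ is the multivector containing $\sigma$. The intersection field is $\mathcal V_1\wedge\mathcal V_2=\{V_1\cap V_2: V_i\in\mathcal V_i\}$ (empty sets discarded). $F_{\mathcal V}(\sigma)=[\sigma]_{\mathcal V}\cup\mathrm{cl}(\sigma)$. A path under $\mathcal V$ is a sequence $\rho:\mathbb Z\cap[a,b]\to K$ with $\rho(i)\in F_{\mathcal V}(\rho(i-1))$; a solution is a bi-infinite such sequence. A multivector $V$ is critical if $H_k(\mathrm{cl}(V),\mathrm{cl}(V)\setminus V)\ne0$ for some $k$, regular otherwise. A solution $\rho$ is essential if whenever $[\rho(i)]_{\mathcal V}$ is regular there are $i^-<i<i^+$ with $[\rho(i^\pm)]_{\mathcal V}\neq[\rho(i)]_{\mathcal V}$. $\mathrm{inv}_{\mathcal V}(A)$ is the set of simplices of $A$ lying on essential solutions with image in $A$ (the maximal invariant set in $A$). An invariant set $S$ ($\mathrm{inv}(S)=S$) is isolated by closed $N$ if $S$ is a union of multivectors and every path in $N$ with both endpoints in $S$ lies in $S$. A Morse decomposition of $S$ is a family of mutually disjoint isolated invariant subsets (Morse sets) of $S$, indexed by a finite poset, such that every essential solution in $S$ either lies in one Morse set or has its $\alpha$-limit set in $M_q$ and $\omega$-limit set in $M_p$ with $q>p$. $S$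 is minimal if $\{S\}$ is its only Morse decomposition; a Morse decomposition is minimal if all its Morse sets are minimal. A connection under $\mathcal V$ from a Morse set $M$ to a Morse set $M'$ is a path $\rho:\mathbb Z\cap[a,b]\to N$ under $\mathcal V$ with $\rho(a)\in M$, $\rho(b)\in M'$. The Conley-Morse graph of a Morse decomposition has one vertex per Morse set (identified with the Morse set), and a directed edge $M\to M'$ iff there is a connection from $M$ to $M'$ (vertices are also annotated by Poincaré polynomials of Conley indices, irrelevant here). A Morse set $M_{1,2}\in\mathcal M_{1,2}$ is relevant if there are $M_1\in\mathcal M_1$, $M_2\in\mathcal M_2$ with $M_{1,2}\subseteq M_1$ and $M_{1,2}\subseteq M_2$; for relevant $M_{1,2}$, $\iota_k(M_{1,2})$ denotes the (unique) Morse set of $\mathcal M_k$ containing $M_{1,2}$. For relevant $M_{1,2},M'_{1,2}$, a relevant connection from $M_{1,2}$ to $M'_{1,2}$ is a connection $\rho:\mathbb Z\cap[a,b]\to N$ under $\mathcal V_1\wedge\mathcal V_2$ from $M_{1,2}$ to $M'_{1,2}$ such that for $k=1,2$, whenever $\rho(i)\in M_k\in\mathcal M_k$, then $M_k=\iota_k(M_{1,2})$ or $M_k=\iota_k(M'_{1,2})$. The relevant Conley-Morse graph $G_{1,2}$ has a vertex for each relevant Morse set of $\mathcal M_{1,2}$ and a directed edge $M_{1,2}\to M'_{1,2}$ iff there is a relevant connection from $M_{1,2}$ to $M'_{1,2}$. *)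

theory Defs
  imports "HOL-Homology.Homology"
begin

definition simplicial_complex :: "'a set set \<Rightarrow> bool" where
  "simplicial_complex K \<longleftrightarrow>
     (\<forall>\<sigma>\<in>K. finite \<sigma> \<and> \<sigma> \<noteq> {}) \<and>
     (\<forall>\<sigma>\<in>K. \<forall>\<tau>. \<tau> \<noteq> {} \<and> \<tau> \<subseteq> \<sigma> \<longrightarrow> \<tau> \<in> K)"

definition finite_simplicial_complex :: "'a set set \<Rightarrow> bool" where
  "finite_simplicial_complex K \<longleftrightarrow> simplicial_complex K \<and> finite K"

definition cl :: "'a set set \<Rightarrow> 'a set set \<Rightarrow> 'a set set" where
  "cl K A = {\<tau>\<in>K. \<exists>\<sigma>\<in>A. \<tau> \<subseteq> \<sigma>}"

definition closed_in_complex :: "'a set set \<Rightarrow> 'a set set \<Rightarrow> bool" where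
  "closed_in_complex K A \<longleftrightarrow> A \<subseteq> K \<and> cl K A = A"

definition convex_in_complex :: "'a set set \<Rightarrow> 'a set set \<Rightarrow> bool" where
  "convex_in_complex K A \<longleftrightarrow> A \<subseteq> K \<and>
     (\<forall>\<sigma>\<in>A. \<forall>\<rho>\<in>A. \<forall>\<tau>\<in>K. \<sigma> \<subseteq> \<tau> \<and> \<tau> \<subseteq> \<rho> \<longrightarrow> \<tau> \<in> A)"

definition multivector :: "'a set set \<Rightarrow> 'a set set \<Rightarrow> bool" where
  "multivector K V \<longleftrightarrow> convex_in_complex K V"

definition multivector_field :: "'a set set \<Rightarrow> 'a set set set \<Rightarrow> bool" where
  "multivector_field K \<V> \<longleftrightarrow>
     (\<forall>V\<in>\<V>. V \<noteq> {} \<and> multivector K V) \<and>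
     (\<forall>V\<in>\<V>. \<forall>W\<in>\<V>. V \<noteq> W \<longrightarrow> V \<inter> W = {}) \<and>
     \<Union>\<V> = K"

definition mv_of :: "'a set set set \<Rightarrow> 'a set \<Rightarrow> 'a set set" where
  "mv_of \<V> \<sigma> = (THE V. V \<in> \<V> \<and> \<sigma> \<in> V)"

definition intersection_field :: "'a set set set \<Rightarrow> 'a set set set \<Rightarrow> 'a set set set" where
  "intersection_field \<V>1 \<V>2 = {A. \<exists>V1\<in>\<V>1. \<exists>V2\<in>\<V>2. A = V1 \<inter> V2 \<and> A \<noteq> {}}"

definition F_map :: "'a set set \<Rightarrow> 'a set set set \<Rightarrow> 'a set \<Rightarrow> 'a set set" where
  "F_map K \<V> \<sigma> = mv_of \<V> \<sigma> \<union> cl K {\<sigma>}"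

text \<open>A path \<rho> : Z \<inter> [a,b] \<rightarrow> A (represented by a function on int together with
its bounds a \<le> b; only the values on [a,b] matter).\<close>
definition is_path_in :: "'a set set \<Rightarrow> 'a set set set \<Rightarrow> 'a set set \<Rightarrow> (int \<Rightarrow> 'a set) \<Rightarrow> int \<Rightarrow> int \<Rightarrow> bool" where
  "is_path_in K \<V> A \<rho> a b \<longleftrightarrow> a \<le> b \<and>
     (\<forall>i\<in>{a..b}. \<rho> i \<in> A \<and> \<rho> i \<in> K) \<and>
     (\<forall>i\<in>{a<..b}. \<rho> i \<in> F_map K \<V> (\<rho> (i - 1)))"

definition is_solution :: "'a set set \<Rightarrow> 'a set set set \<Rightarrow> (int \<Rightarrow> 'a set) \<Rightarrow> bool" where
  "is_solution K \<V> \<rho> \<longleftrightarrow> (\<forall>i. \<rho> i \<in> K \<and> \<rho> (i + 1) \<in> F_map K \<V> (\<rho> i))"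

text \<open>Geometric realization of a set of simplices (barycentric coordinates), with the
product topology on 'a \<Rightarrow> real.  Relative homology of the pair (cl V, cl V \ V) is
taken as singular homology of the realizations (which agrees with simplicial homology).\<close>

definition realization :: "'a set set \<Rightarrow> ('a \<Rightarrow> real) set" where
  "realization A = (\<Union>\<sigma>\<in>A. {f. (\<forall>x. 0 \<le> f x) \<and> (\<forall>x. x \<notin> \<sigma> \<longrightarrow> f x = 0) \<and> (\<Sum>x\<in>\<sigma>. f x) = 1})"

definition critical_mv :: "'a set set \<Rightarrow> 'a set set \<Rightarrow> bool" where
  "critical_mv K V \<longleftrightarrow>
     (\<exists>p::int. \<not> trivial_group
        (relative_homology_group p
           (subtopology (product_topology (\<lambda>_. euclideanreal) UNIV) (realization (cl K V)))
           (realization (cl K V - V))))"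

definition regular_mv :: "'a set set \<Rightarrow> 'a set set \<Rightarrow> bool" where
  "regular_mv K V \<longleftrightarrow> \<not> critical_mv K V"

definition essential_solution :: "'a set set \<Rightarrow> 'a set set set \<Rightarrow> (int \<Rightarrow> 'a set) \<Rightarrow> bool" where
  "essential_solution K \<V> \<rho> \<longleftrightarrow> is_solution K \<V> \<rho> \<and>
     (\<forall>i. regular_mv K (mv_of \<V> (\<rho> i)) \<longrightarrow>
        (\<exists>j<i. mv_of \<V> (\<rho> j) \<noteq> mv_of \<V> (\<rho> i)) \<and>
        (\<exists>j>i. mv_of \<V> (\<rho> j) \<noteq> mv_of \<V> (\<rho> i)))"

definition inv_set :: "'a set set \<Rightarrow> 'a set set set \<Rightarrow> 'a set set \<Rightarrow> 'a set set" where
  "inv_set K \<V> A = {\<sigma>\<in>A. \<exists>\<rho>. essential_solution K \<V> \<rho> \<and> range \<rho> \<subseteq> A \<and> \<sigma> \<in> range \<rho>}"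

definition isolated_by :: "'a set set \<Rightarrow> 'a set set set \<Rightarrow> 'a set set \<Rightarrow> 'a set set \<Rightarrow> bool" where
  "isolated_by K \<V> N S \<longleftrightarrow> closed_in_complex K N \<and> S \<subseteq> N \<and>
     (\<forall>\<sigma>\<in>S. mv_of \<V> \<sigma> \<subseteq> S) \<and>
     (\<forall>\<rho> a b. is_path_in K \<V> N \<rho> a b \<and> \<rho> a \<in> S \<and> \<rho> b \<in> S \<longrightarrow> (\<forall>i\<in>{a..b}. \<rho> i \<in> S))"

definition isolated_invariant_set_by :: "'a set set \<Rightarrow> 'a set set set \<Rightarrow> 'a set set \<Rightarrow> 'a set set \<Rightarrow> bool" where
  "isolated_invariant_set_by K \<V> N S \<longleftrightarrow> inv_set K \<V> S = S \<and> isolated_by K \<V> N S"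

definition isolated_invariant_set :: "'a set set \<Rightarrow> 'a set set set \<Rightarrow> 'a set set \<Rightarrow> bool" where
  "isolated_invariant_set K \<V> S \<longleftrightarrow> (\<exists>N. isolated_invariant_set_by K \<V> N S)"

definition alpha_limit :: "(int \<Rightarrow> 'a set) \<Rightarrow> 'a set set" where
  "alpha_limit \<rho> = {\<sigma>. \<forall>t. \<exists>i\<le>t. \<rho> i = \<sigma>}"

definition omega_limit :: "(int \<Rightarrow> 'a set) \<Rightarrow> 'a set set" where
  "omega_limit \<rho> = {\<sigma>. \<forall>t. \<exists>i\<ge>t. \<rho> i = \<sigma>}"

text \<open>Since the Morse sets are nonempty and
disjoint, the indexing is injective, so we take the family itself as index set, with a
partial order r on it ((p,q) \<in> r meaning p \<le> q).\<close>
definition morse_decomposition :: "'a set set \<Rightarrow> 'a set set set \<Rightarrow> 'a set set \<Rightarrow> 'a set set set \<Rightarrow> bool" where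
  "morse_decomposition K \<V> S \<M> \<longleftrightarrow> finite \<M> \<and>
     (\<forall>M\<in>\<M>. M \<noteq> {} \<and> M \<subseteq> S \<and> isolated_invariant_set K \<V> M) \<and>
     (\<forall>M\<in>\<M>. \<forall>M'\<in>\<M>. M \<noteq> M' \<longrightarrow> M \<inter> M' = {}) \<and>
     (\<exists>r. partial_order_on \<M> r \<and>
        (\<forall>\<rho>. essential_solution K \<V> \<rho> \<and> range \<rho> \<subseteq> S \<longrightarrow>
           (\<exists>M\<in>\<M>. range \<rho> \<subseteq> M) \<or>
           (\<exists>Mq\<in>\<M>. \<exists>Mp\<in>\<M>. (Mp, Mq) \<in> r \<and> Mp \<noteq> Mq \<and>
               alpha_limit \<rho> \<subseteq> Mq \<and> omega_limit \<rho> \<subseteq> Mp)))"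

definition minimal_set :: "'a set set \<Rightarrow> 'a set set set \<Rightarrow> 'a set set \<Rightarrow> bool" where
  "minimal_set K \<V> S \<longleftrightarrow> (\<forall>\<M>. morse_decomposition K \<V> S \<M> \<longleftrightarrow> \<M> = {S})"

definition minimal_morse_decomposition :: "'a set set \<Rightarrow> 'a set set set \<Rightarrow> 'a set set \<Rightarrow> 'a set set set \<Rightarrow> bool" where
  "minimal_morse_decomposition K \<V> S \<M> \<longleftrightarrow>
     morse_decomposition K \<V> S \<M> \<and> (\<forall>M\<in>\<M>. minimal_set K \<V> M)"

definition connection :: "'a set set \<Rightarrow> 'a set set set \<Rightarrow> 'a set set \<Rightarrow> 'a set set \<Rightarrow> 'a set set \<Rightarrow> bool" where
  "connection K \<V> N M M' \<longleftrightarrow> (\<exists>\<rho> a b. is_path_in K \<V> N \<rho> a b \<and> \<rho> a \<in> M \<and> \<rho> b \<in> M')"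

definition cm_edge :: "'a set set \<Rightarrow> 'a set set set \<Rightarrow> 'a set set \<Rightarrow> 'a set set set \<Rightarrow> 'a set set \<Rightarrow> 'a set set \<Rightarrow> bool" where
  "cm_edge K \<V> N \<M> M M' \<longleftrightarrow> M \<in> \<M> \<and> M' \<in> \<M> \<and> connection K \<V> N M M'"

definition relevant :: "'a set set set \<Rightarrow> 'a set set set \<Rightarrow> 'a set set set \<Rightarrow> 'a set set \<Rightarrow> bool" where
  "relevant \<M>1 \<M>2 \<M>12 M \<longleftrightarrow> M \<in> \<M>12 \<and> (\<exists>M1\<in>\<M>1. M \<subseteq> M1) \<and> (\<exists>M2\<in>\<M>2. M \<subseteq> M2)"

definition iota :: "'a set set set \<Rightarrow> 'a set set \<Rightarrow> 'a set set" where
  "iota \<M> M = (THE M'. M' \<in> \<M> \<and> M \<subseteq> M')"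

definition relevant_connection ::
  "'a set set \<Rightarrow> 'a set set set \<Rightarrow> 'a set set set \<Rightarrow> 'a set set \<Rightarrow> 'a set set set \<Rightarrow> 'a set set set \<Rightarrow>
   'a set set \<Rightarrow> 'a set set \<Rightarrow> bool" where
  "relevant_connection K \<V>1 \<V>2 N \<M>1 \<M>2 M M' \<longleftrightarrow>
     (\<exists>\<rho> a b. is_path_in K (intersection_field \<V>1 \<V>2) N \<rho> a b \<and> \<rho> a \<in> M \<and> \<rho> b \<in> M' \<and>
        (\<forall>i\<in>{a..b}.
           (\<forall>M1\<in>\<M>1. \<rho> i \<in> M1 \<longrightarrow> M1 = iota \<M>1 M \<or> M1 = iota \<M>1 M') \<and>
           (\<forall>M2\<in>\<M>2. \<rho> i \<in> M2 \<longrightarrow> M2 = iota \<M>2 M \<or> M2 = iota \<M>2 M')))"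

definition relevant_cm_edge ::
  "'a set set \<Rightarrow> 'a set set set \<Rightarrow> 'a set set set \<Rightarrow> 'a set set \<Rightarrow> 'a set set set \<Rightarrow> 'a set set set \<Rightarrow>
   'a set set set \<Rightarrow> 'a set set \<Rightarrow> 'a set set \<Rightarrow> bool" where
  "relevant_cm_edge K \<V>1 \<V>2 N \<M>1 \<M>2 \<M>12 M M' \<longleftrightarrow>
     relevant \<M>1 \<M>2 \<M>12 M \<and> relevant \<M>1 \<M>2 \<M>12 M' \<and>
     relevant_connection K \<V>1 \<V>2 N \<M>1 \<M>2 M M'"

end

theory Submission
  imports Defs
begin

text \<open>The multivector of a simplex under \<open>\<V>1 \<and> \<V>2\<close> is the intersection of its multivectors
  under \<open>\<V>1\<close> and \<open>\<V>2\<close>, so every path under the intersection field is a path under each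
  \<open>\<V>k\<close>.  A relevant connection from \<open>M\<close> to \<open>M'\<close> therefore already connects \<open>\<iota>k(M)\<close> to
  \<open>\<iota>k(M')\<close> in the Conley-Morse graph of \<open>\<M>k\<close>; in particular the edge exists even when
  \<open>\<iota>k(M) = \<iota>k(M')\<close>.\<close>

lemma multivector_field_disjoint:
  assumes "multivector_field K \<V>" "V \<in> \<V>" "W \<in> \<V>" "V \<noteq> W"
  shows "V \<inter> W = {}"
  using assms unfolding multivector_field_def by simp

lemma multivector_field_covers:
  assumes "multivector_field K \<V>" "\<sigma> \<in> K"
  obtains V where "V \<in> \<V>" "\<sigma> \<in> V"
  using assms unfolding multivector_field_def by auto

lemma mv_of_eqI:
  assumes "multivector_field K \<V>" "V \<in> \<V>" "\<sigma> \<in> V"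
  shows "mv_of \<V> \<sigma> = V"
  unfolding mv_of_def
proof (rule the_equality)
  show "V \<in> \<V> \<and> \<sigma> \<in> V" using assms(2,3) ..
next
  fix W assume "W \<in> \<V> \<and> \<sigma> \<in> W"
  then show "W = V" using multivector_field_disjoint[OF assms(1,2)] assms(3) by blast
qed

lemma intersection_field_commute:
  "intersection_field \<V>1 \<V>2 = intersection_field \<V>2 \<V>1"
  unfolding intersection_field_def by blast

lemma mv_of_intersection_field:
  assumes "multivector_field K \<V>1" "multivector_field K \<V>2" "\<sigma> \<in> K"
  shows "mv_of (intersection_field \<V>1 \<V>2) \<sigma> = mv_of \<V>1 \<sigma> \<inter> mv_of \<V>2 \<sigma>"
proof -
  obtain V1 where V1: "V1 \<in> \<V>1" "\<sigma> \<in> V1"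
    using multivector_field_covers[OF assms(1,3)] .
  obtain V2 where V2: "V2 \<in> \<V>2" "\<sigma> \<in> V2"
    using multivector_field_covers[OF assms(2,3)] .
  have "mv_of (intersection_field \<V>1 \<V>2) \<sigma> = V1 \<inter> V2"
    unfolding mv_of_def
  proof (rule the_equality)
    show "V1 \<inter> V2 \<in> intersection_field \<V>1 \<V>2 \<and> \<sigma> \<in> V1 \<inter> V2"
      using V1 V2 unfolding intersection_field_def by blast
  next
    fix A assume A: "A \<in> intersection_field \<V>1 \<V>2 \<and> \<sigma> \<in> A"
    then obtain W1 W2 where W: "W1 \<in> \<V>1" "W2 \<in> \<V>2" "A = W1 \<inter> W2"
      unfolding intersection_field_def by blast
    have "W1 = V1" using mv_of_eqI[OF assms(1) W(1)] mv_of_eqI[OF assms(1) V1] A W by blast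
    moreover have "W2 = V2" using mv_of_eqI[OF assms(2) W(2)] mv_of_eqI[OF assms(2) V2] A W by blast
    ultimately show "A = V1 \<inter> V2" using W(3) by simp
  qed
  then show ?thesis
    using mv_of_eqI[OF assms(1) V1] mv_of_eqI[OF assms(2) V2] by simp
qed

lemma is_path_in_mono:
  assumes "\<And>\<sigma>. \<sigma> \<in> K \<Longrightarrow> F_map K \<W> \<sigma> \<subseteq> F_map K \<V> \<sigma>"
    and "is_path_in K \<W> A \<rho> a b"
  shows "is_path_in K \<V> A \<rho> a b"
proof -
  have "\<rho> (i - 1) \<in> K" if "i \<in> {a<..b}" for i
    using assms(2) that unfolding is_path_in_def by auto
  then show ?thesis using assms unfolding is_path_in_def by blast
qed

lemma is_path_in_intersection_field:
  assumes "multivector_field K \<V>1" "multivector_field K \<V>2"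
    and "is_path_in K (intersection_field \<V>1 \<V>2) A \<rho> a b"
  shows "is_path_in K \<V>1 A \<rho> a b"
  using assms(3)
proof (rule is_path_in_mono[rotated])
  fix \<sigma> assume "\<sigma> \<in> K"
  then show "F_map K (intersection_field \<V>1 \<V>2) \<sigma> \<subseteq> F_map K \<V>1 \<sigma>"
    unfolding F_map_def using mv_of_intersection_field[OF assms(1,2)] by blast
qed

lemma iota_eqI:
  assumes "\<forall>X\<in>\<M>. \<forall>Y\<in>\<M>. X \<noteq> Y \<longrightarrow> X \<inter> Y = {}"
    and "M \<noteq> {}" "M1 \<in> \<M>" "M \<subseteq> M1"
  shows "iota \<M> M = M1"
  unfolding iota_def
proof (rule the_equality)
  show "M1 \<in> \<M> \<and> M \<subseteq> M1" using assms(3,4) ..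
next
  fix X assume "X \<in> \<M> \<and> M \<subseteq> X"
  then show "X = M1" using assms by blast
qed

lemma cm_edge_iota_of_path:
  assumes "morse_decomposition K \<V> S \<M>"
    and "is_path_in K \<V> N \<rho> a b" "\<rho> a \<in> M" "\<rho> b \<in> M'"
    and "M1 \<in> \<M>" "M \<subseteq> M1" "M1' \<in> \<M>" "M' \<subseteq> M1'"
  shows "cm_edge K \<V> N \<M> (iota \<M> M) (iota \<M> M')"
proof -
  have disjoint: "\<forall>X\<in>\<M>. \<forall>Y\<in>\<M>. X \<noteq> Y \<longrightarrow> X \<inter> Y = {}"
    using assms(1) unfolding morse_decomposition_def by (elim conjE)
  have "iota \<M> M = M1" using iota_eqI[OF disjoint _ assms(5,6)] assms(3) by blast
  moreover have "iota \<M> M' = M1'" using iota_eqI[OF disjoint _ assms(7,8)] assms(4) by blast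
  moreover have "connection K \<V> N M1 M1'"
    unfolding connection_def using assms(2-4,6,8) by blast
  ultimately show ?thesis
    unfolding cm_edge_def using assms(5,7) by simp
qed

theorem proposition24:
  fixes K N :: "'a set set"
    and \<V>1 \<V>2 :: "'a set set set"
    and S1 S2 S12 :: "'a set set"
    and \<M>1 \<M>2 \<M>12 :: "'a set set set"
    and M M' :: "'a set set"
  assumes "finite_simplicial_complex K"
    and "closed_in_complex K N"
    and "multivector_field K \<V>1"
    and "multivector_field K \<V>2"
    and "isolated_invariant_set_by K \<V>1 N S1"
    and "isolated_invariant_set_by K \<V>2 N S2"
    and "morse_decomposition K \<V>1 S1 \<M>1"
    and "morse_decomposition K \<V>2 S2 \<M>2"
    and "S12 = inv_set K (intersection_field \<V>1 \<V>2) N"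
    and "minimal_morse_decomposition K (intersection_field \<V>1 \<V>2) S12 \<M>12"
    and "relevant_cm_edge K \<V>1 \<V>2 N \<M>1 \<M>2 \<M>12 M M'"
  shows "(iota \<M>1 M = iota \<M>1 M' \<or> cm_edge K \<V>1 N \<M>1 (iota \<M>1 M) (iota \<M>1 M')) \<and>
         (iota \<M>2 M = iota \<M>2 M' \<or> cm_edge K \<V>2 N \<M>2 (iota \<M>2 M) (iota \<M>2 M'))"
proof -
  have "relevant \<M>1 \<M>2 \<M>12 M" "relevant \<M>1 \<M>2 \<M>12 M'"
    and "relevant_connection K \<V>1 \<V>2 N \<M>1 \<M>2 M M'"
    using assms(11) unfolding relevant_cm_edge_def by simp_all
  then obtain \<rho> a b A1 A2 B1 B2 where path: "is_path_in K (intersection_field \<V>1 \<V>2) N \<rho> a b"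
    and ends: "\<rho> a \<in> M" "\<rho> b \<in> M'"
    and "A1 \<in> \<M>1" "M \<subseteq> A1" "A2 \<in> \<M>2" "M \<subseteq> A2"
    and "B1 \<in> \<M>1" "M' \<subseteq> B1" "B2 \<in> \<M>2" "M' \<subseteq> B2"
    unfolding relevant_def relevant_connection_def by meson
  moreover have "is_path_in K \<V>1 N \<rho> a b"
    using is_path_in_intersection_field[OF assms(3,4) path] .
  moreover have "is_path_in K \<V>2 N \<rho> a b"
    using is_path_in_intersection_field[OF assms(4,3)] path
    by (simp add: intersection_field_commute)
  ultimately show ?thesis
    using cm_edge_iota_of_path[OF assms(7) _ ends] cm_edge_iota_of_path[OF assms(8) _ ends]
    by simp
qed

end
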